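(* Let $J_1,\dots,J_7$ be pairwise anticommuting orthogonal complex structures on $\mathfrak a=\mathbb R^8$, $\theta\in(0,\pi/2)$, $J'=J_7\cos\theta+J_6J_7\sin\theta$, and $V=\mathrm{Span}(J_1,\dots,J_6,J')$ with the inner product $\|J\|^2=-\frac18\mathrm{Tr}(J^2)$. Then for every $N\in O(\mathfrak a)$ with $NVN^{-1}\subset V$ (so that $K\mapsto N^{-1}KN$ is orthogonal on $V$) there exist $\varepsilon_7\in\{\pm1\}$ with $N^{-1}J_6N=J_6$, $N^{-1}J_7N=\varepsilon_7J_7$, $N^{-1}J'N=\varepsilon_7J'$. In particular there is no such $N$ with $N^{-1}J_6N=-J_6$, and for every inner product on $V$ whose restriction to $\mathrm{Span}(J_1,\dots,J_5)$ is standard and with $J_6,J'\perp J_i$ ($i\le5$), the pair $(V,\langle\cdot,\cdot\rangle)$ is not a WS-pair.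
   Context: Orthogonal complex structures on $\mathbb R^8$ are orthogonal matrices $J$ with $J^2=-I_8$. An inner product on $V\subset\mathfrak{so}(8)$ is standard if it is a positive multiple of $(J,K)\mapsto-\mathrm{Tr}(JK)$. For a Euclidean space $\mathfrak a$, a subspace $V\subset\mathfrak{so}(\mathfrak a)$ with inner product $\langle\cdot,\cdot\rangle$ defines the metric 2-step nilpotent Lie algebra $\mathfrak n=V\oplus\mathfrak a$ (orthogonal sum, $V$ central, $\langle J,[X,Y]\rangle=\langle JX,Y\rangle$); it is a WS-pair if the corresponding simply connected nilpotent Lie group with left-invariant metric is weakly symmetric. Standing fact: this holds iff for every $J\in V$, $X\in\mathfrak a$ there is $N\in\mathcal N(V)=\{N\in O(\mathfrak a): NVN^{-1}\subset V$, $K\mapsto NKN^{-1}$ orthogonal on $(V,\langle\cdot,\cdot\rangle)\}$ with $NX=-X$, $NJ=-JN$. *)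

theory Defs
  imports "HOL-Analysis.Analysis"
begin

type_synonym mat8 = "real^8^8"

definition ocs :: "mat8 \<Rightarrow> bool" where
  "ocs J \<longleftrightarrow> orthogonal_matrix J \<and> J ** J = - mat 1"

definition inner_product_on :: "mat8 set \<Rightarrow> (mat8 \<Rightarrow> mat8 \<Rightarrow> real) \<Rightarrow> bool" where
  "inner_product_on V ip \<longleftrightarrow>
     (\<forall>A\<in>V. \<forall>B\<in>V. ip A B = ip B A) \<and>
     (\<forall>A\<in>V. \<forall>B\<in>V. \<forall>C\<in>V. \<forall>a b. ip (a *\<^sub>R A + b *\<^sub>R B) C = a * ip A C + b * ip B C) \<and>
     (\<forall>A\<in>V. A \<noteq> 0 \<longrightarrow> ip A A > 0)"

definition standard_on :: "mat8 set \<Rightarrow> (mat8 \<Rightarrow> mat8 \<Rightarrow> real) \<Rightarrow> bool" where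
  "standard_on W ip \<longleftrightarrow> (\<exists>c>0. \<forall>A\<in>W. \<forall>B\<in>W. ip A B = - c * trace (A ** B))"

definition normalizer_set :: "mat8 set \<Rightarrow> (mat8 \<Rightarrow> mat8 \<Rightarrow> real) \<Rightarrow> mat8 set" where
  "normalizer_set V ip = {N. orthogonal_matrix N \<and>
      (\<forall>K\<in>V. N ** K ** matrix_inv N \<in> V) \<and>
      (\<forall>K\<in>V. \<forall>L\<in>V. ip (N ** K ** matrix_inv N) (N ** L ** matrix_inv N) = ip K L)}"

text \<open>WS-pair, via the standing characterization.\<close>
definition WS_pair :: "mat8 set \<Rightarrow> (mat8 \<Rightarrow> mat8 \<Rightarrow> real) \<Rightarrow> bool" where
  "WS_pair V ip \<longleftrightarrow> (\<forall>J\<in>V. \<forall>X::real^8. \<exists>N\<in>normalizer_set V ip.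
      N *v X = - X \<and> N ** J = - (J ** N))"

end

theory Submission
  imports Defs
begin

text \<open>
  Work in the real algebra generated by \<open>J\<^sub>1,\<dots>,J\<^sub>7\<close> and write \<open>x = \<Sum>\<^sub>i\<^sub>\<le>\<^sub>5 a\<^sub>i J\<^sub>i + b J\<^sub>6 + c J'\<close>
  for the elements of \<open>V\<close>. Then \<open>x\<^sup>2 = -|x|\<^sup>2 + 2c sin \<theta> J\<^sub>6J\<^sub>7 \<Sum> a\<^sub>iJ\<^sub>i\<close>, so \<open>x\<^sup>2\<close> is a scalar iff
  \<open>c \<Sum> a\<^sub>iJ\<^sub>i = 0\<close>. Conjugation by \<open>N\<close> is an algebra automorphism preserving \<open>V\<close> and the
  scalars, hence this condition. Testing it on \<open>N J\<^sub>6 N\<^sup>-\<^sup>1 + y\<close> for \<open>y = J', J\<^sub>1\<close> gives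
  \<open>N J\<^sub>6 N\<^sup>-\<^sup>1 = \<plusminus>J\<^sub>6\<close>; elements anticommuting with \<open>J\<^sub>6\<close> then lie in
  \<open>span(J\<^sub>1,\<dots>,J\<^sub>5) \<union> \<real>J'\<close>, which with the relation
  \<open>J'J\<^sub>k + J\<^sub>kJ' = 2 sin \<theta> (cos \<theta> J\<^sub>6J' + sin \<theta> J')J\<^sub>k\<close> (\<open>k \<le> 5\<close>) forces \<open>N J' N\<^sup>-\<^sup>1 = \<epsilon>J'\<close> and
  \<open>N J\<^sub>6 N\<^sup>-\<^sup>1 = J\<^sub>6\<close>; finally \<open>J\<^sub>7 = cos \<theta> J' - sin \<theta> J\<^sub>6J'\<close>. Since no \<open>N\<close> reverses \<open>J\<^sub>6\<close>, the
  WS-pair criterion already fails at \<open>J = J\<^sub>6\<close>, whatever the inner product.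
\<close>

lemma anticommute_sum_right:
  fixes x :: "'a::ring"
  assumes "\<And>i. i \<in> F \<Longrightarrow> x * f i = - (f i * x)"
  shows "x * sum f F = - (sum f F * x)"
proof -
  have "x * sum f F = (\<Sum>i\<in>F. - (f i * x))"
    unfolding sum_distrib_left by (rule sum.cong) (auto simp: assms)
  then show ?thesis by (simp add: sum_distrib_right sum_negf)
qed

lemma scaleR_eq_0_right_invertible:
  fixes x y :: "'a::real_algebra_1"
  assumes "x * y = 1" and "t *\<^sub>R x = 0"
  shows "t = 0"
proof -
  have "(of_real t :: 'a) = (t *\<^sub>R x) * y" using assms(1) by (simp add: of_real_def)
  then show ?thesis using assms(2) by simp
qed

lemma scaleR_double: "(2 * t) *\<^sub>R x = t *\<^sub>R x + t *\<^sub>R (x :: 'a::real_vector)"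
  by (simp add: scaleR_2 flip: scaleR_scaleR)

lemma scaleR_eq_minus_self_right_invertible:
  fixes x y :: "'a::real_algebra_1"
  assumes "x * y = 1" and "t *\<^sub>R x = - (t *\<^sub>R x)"
  shows "t = 0"
proof -
  have "(2 * t) *\<^sub>R x = 0" using assms(2) scaleR_double[of t x] by (simp add: eq_neg_iff_add_eq_0)
  then show ?thesis using scaleR_eq_0_right_invertible[OF assms(1)] by simp
qed

definition conj_by :: "'a::real_algebra_1 \<Rightarrow> 'a \<Rightarrow> 'a \<Rightarrow> 'a" where
  "conj_by N M x = N * x * M"

lemma conj_by_mult: "M * N = 1 \<Longrightarrow> conj_by N M (x * y) = conj_by N M x * conj_by N M y"
  by (simp add: conj_by_def mult.assoc flip: mult.assoc[of M N])

lemma conj_by_add: "conj_by N M (x + y) = conj_by N M x + conj_by N M y"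
  by (simp add: conj_by_def algebra_simps)

lemma conj_by_diff: "conj_by N M (x - y) = conj_by N M x - conj_by N M y"
  by (simp add: conj_by_def algebra_simps)

lemma conj_by_minus: "conj_by N M (- x) = - conj_by N M x"
  by (simp add: conj_by_def)

lemma conj_by_scaleR: "conj_by N M (r *\<^sub>R x) = r *\<^sub>R conj_by N M x"
  by (simp add: conj_by_def)

lemma conj_by_of_real: "N * M = 1 \<Longrightarrow> conj_by N M (of_real t) = of_real t"
  by (simp add: conj_by_def of_real_def)

lemma conj_by_conj_by: "M * N = 1 \<Longrightarrow> conj_by M N (conj_by N M x) = x"
  by (simp add: conj_by_def mult.assoc) (simp flip: mult.assoc)

lemma conj_by_square:
  assumes "N * M = 1" "M * N = 1" "x * x = of_real t"
  shows "conj_by N M x * conj_by N M x = of_real t"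
  using assms conj_by_mult[of M N x x] by (simp add: conj_by_of_real)

lemma conj_by_anticommute:
  assumes "M * N = 1" "x * y = - (y * x)"
  shows "conj_by N M x * conj_by N M y = - (conj_by N M y * conj_by N M x)"
  using assms by (metis conj_by_minus conj_by_mult)

locale anticommuting_seven =
  fixes J :: "nat \<Rightarrow> 'a::real_algebra_1" and th :: real
  assumes J_square: "\<And>i. i \<in> {1..7} \<Longrightarrow> J i * J i = -1"
    and J_anticomm: "\<And>i j. i \<in> {1..7} \<Longrightarrow> j \<in> {1..7} \<Longrightarrow> i \<noteq> j \<Longrightarrow> J i * J j = - (J j * J i)"
    and th_pos: "0 < th" and th_less: "th < pi / 2"
begin

definition "cth = cos th"
definition "sth = sin th"
definition "D = J 6 * J 7"
definition "J' = cth *\<^sub>R J 7 + sth *\<^sub>R D"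
definition "lin5 a = (\<Sum>i\<in>{1..5}. a i *\<^sub>R J i)"
definition "vcomb a b c = lin5 a + b *\<^sub>R J 6 + c *\<^sub>R J'"

lemma cth_pos: "cth > 0" unfolding cth_def using th_pos th_less by (intro cos_gt_zero) auto
lemma sth_pos: "sth > 0" unfolding sth_def using th_pos th_less by (intro sin_gt_zero) auto
lemma cth_sth: "cth * cth + sth * sth = 1"
  using sin_cos_squared_add[of th] unfolding cth_def sth_def by (simp add: power2_eq_square)

lemma J66: "J 6 * J 6 = -1" by (rule J_square) simp
lemma J77: "J 7 * J 7 = -1" by (rule J_square) simp
lemma Jkk: "k \<in> {1..5} \<Longrightarrow> J k * J k = -1" by (rule J_square) auto
lemma J67: "J 6 * J 7 = - (J 7 * J 6)" by (rule J_anticomm) auto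
lemma J76: "J 7 * J 6 = - (J 6 * J 7)" by (rule J_anticomm) auto
lemma J6k: "k \<in> {1..5} \<Longrightarrow> J 6 * J k = - (J k * J 6)" by (rule J_anticomm) auto
lemma J_right_inverse: "i \<in> {1..7} \<Longrightarrow> J i * (- J i) = 1" using J_square by simp

lemma J_lin5: "m \<in> {6, 7} \<Longrightarrow> J m * lin5 a = - (lin5 a * J m)"
  unfolding lin5_def by (rule anticommute_sum_right) (use J_anticomm[of m] in auto)

lemma J6_lin5: "J 6 * lin5 a = - (lin5 a * J 6)" by (rule J_lin5) simp
lemma J7_lin5: "J 7 * lin5 a = - (lin5 a * J 7)" by (rule J_lin5) simp

lemma D_lin5: "D * lin5 a = lin5 a * D"
proof -
  have "D * lin5 a = J 6 * (J 7 * lin5 a)" by (simp add: D_def mult.assoc)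
  also have "\<dots> = - ((J 6 * lin5 a) * J 7)" by (simp add: J7_lin5 mult.assoc)
  also have "\<dots> = lin5 a * D" by (simp add: J6_lin5 D_def mult.assoc)
  finally show ?thesis .
qed

lemma square_sum_J:
  assumes "F \<subseteq> {1..7}"
  shows "(\<Sum>i\<in>F. a i *\<^sub>R J i) * (\<Sum>i\<in>F. a i *\<^sub>R J i) = - of_real (\<Sum>i\<in>F. (a i)\<^sup>2)"
proof -
  have "finite F" using assms finite_subset by blast
  from this assms show ?thesis
  proof (induction F rule: finite_subset_induct')
    case empty then show ?case by simp
  next
    case (insert k F)
    let ?s = "\<Sum>i\<in>F. a i *\<^sub>R J i"
    have anti: "J k * ?s = - (?s * J k)"
    proof (rule anticommute_sum_right)
      fix i assume "i \<in> F"
      then have "J k * J i = - (J i * J k)" using insert by (intro J_anticomm) auto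
      then show "J k * (a i *\<^sub>R J i) = - (a i *\<^sub>R J i * J k)" by simp
    qed
    have "(a k *\<^sub>R J k + ?s) * (a k *\<^sub>R J k + ?s)
        = (a k * a k) *\<^sub>R (J k * J k) + a k *\<^sub>R (J k * ?s + ?s * J k) + ?s * ?s"
      by (simp add: algebra_simps)
    also have "\<dots> = - of_real ((a k)\<^sup>2 + (\<Sum>i\<in>F. (a i)\<^sup>2))"
      using insert J_square anti by (simp add: of_real_def algebra_simps power2_eq_square)
    finally show ?case using insert by simp
  qed
qed

lemma lin5_square: "lin5 a * lin5 a = - of_real (\<Sum>i\<in>{1..5}. (a i)\<^sup>2)"
  unfolding lin5_def by (rule square_sum_J) auto

lemma anticommutator_J_lin5:
  assumes k: "k \<in> {1..5}"
  shows "J k * lin5 a + lin5 a * J k = - of_real (2 * a k)"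
proof -
  let ?r = "\<Sum>i\<in>{1..5} - {k}. a i *\<^sub>R J i"
  have split: "lin5 a = a k *\<^sub>R J k + ?r" unfolding lin5_def using k by (simp add: sum.remove)
  have anti: "J k * ?r = - (?r * J k)"
    by (rule anticommute_sum_right) (use k J_anticomm[of k] in auto)
  have "J k * lin5 a + lin5 a * J k
      = a k *\<^sub>R (J k * J k) + a k *\<^sub>R (J k * J k) + (J k * ?r + ?r * J k)"
    unfolding split by (simp add: algebra_simps)
  also have "\<dots> = (2 * a k) *\<^sub>R (J k * J k)" using anti by (simp add: scaleR_double)
  also have "\<dots> = - of_real (2 * a k)" using Jkk[OF k] by (simp add: scaleR_conv_of_real)
  finally show ?thesis .
qed

lemma J_D:
  assumes "k \<in> {1..5}"
  shows "J k * D = D * J k"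
proof -
  have "J k * D = - (J 6 * (J k * J 7))"
    using J_anticomm[of k 6] assms by (simp add: D_def flip: mult.assoc)
  also have "\<dots> = D * J k"
    using J_anticomm[of k 7] assms by (simp add: D_def mult.assoc)
  finally show ?thesis .
qed

lemma J7_D: "J 7 * D = J 6"
proof -
  have "J 7 * D = - ((J 7 * J 7) * J 6)" by (simp add: D_def J67 mult.assoc)
  then show ?thesis by (simp add: J77)
qed
lemma D_J7: "D * J 7 = - J 6" by (simp add: D_def mult.assoc J77)
lemma J6_D: "J 6 * D = - J 7" by (simp add: D_def mult.assoc[symmetric] J66)
lemma D_J6: "D * J 6 = J 7"
proof -
  have "D * J 6 = - (J 6 * J 6 * J 7)" by (simp add: D_def mult.assoc J76)
  then show ?thesis by (simp add: J66)
qed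
lemma D_square: "D * D = -1"
proof -
  have "D * D = (D * J 6) * J 7" by (simp add: D_def mult.assoc)
  then show ?thesis by (simp add: D_J6 J77)
qed

lemma J'_square: "J' * J' = -1"
proof -
  have "J' * J' = (cth * cth) *\<^sub>R (J 7 * J 7) + (cth * sth) *\<^sub>R (J 7 * D + D * J 7)
      + (sth * sth) *\<^sub>R (D * D)"
    by (simp add: J'_def algebra_simps)
  also have "\<dots> = - ((cth * cth + sth * sth) *\<^sub>R 1)"
    by (simp add: J77 J7_D D_J7 D_square algebra_simps)
  finally show ?thesis by (simp add: cth_sth)
qed

lemma J6_J': "J 6 * J' = cth *\<^sub>R D - sth *\<^sub>R J 7"
  by (simp add: J'_def algebra_simps J6_D D_def[symmetric])
lemma J'_J6: "J' * J 6 = - (J 6 * J')"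
  by (simp add: J6_J' J'_def algebra_simps D_J6 J6_D J76 D_def[symmetric])

lemma anticommutator_J'_lin5: "lin5 a * J' + J' * lin5 a = (2 * sth) *\<^sub>R (D * lin5 a)"
proof -
  have "lin5 a * J' + J' * lin5 a
      = cth *\<^sub>R (lin5 a * J 7 + J 7 * lin5 a) + sth *\<^sub>R (lin5 a * D + D * lin5 a)"
    by (simp add: J'_def algebra_simps)
  also have "\<dots> = (2 * sth) *\<^sub>R (D * lin5 a)"
    by (simp add: J7_lin5 D_lin5 scaleR_double scaleR_right_distrib)
  finally show ?thesis .
qed

lemma D_eq: "D = cth *\<^sub>R (J 6 * J') + sth *\<^sub>R J'"
proof -
  have "cth *\<^sub>R (J 6 * J') + sth *\<^sub>R J' = (cth * cth + sth * sth) *\<^sub>R D"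
    unfolding J6_J' by (simp add: J'_def algebra_simps)
  then show ?thesis by (simp add: cth_sth)
qed

lemma J7_eq: "J 7 = cth *\<^sub>R J' - sth *\<^sub>R (J 6 * J')"
proof -
  have "cth *\<^sub>R J' - sth *\<^sub>R (J 6 * J') = (cth * cth + sth * sth) *\<^sub>R J 7"
    unfolding J6_J' by (simp add: J'_def algebra_simps)
  then show ?thesis by (simp add: cth_sth)
qed

lemma lin5_scaleR: "r *\<^sub>R lin5 a = lin5 (\<lambda>i. r * a i)"
  by (simp add: lin5_def scaleR_sum_right)

lemma lin5_ne_scaleR_D:
  assumes "lin5 a = r *\<^sub>R D"
  shows "r = 0"
proof -
  have one: "(1::nat) \<in> {1..5}" and two: "(2::nat) \<in> {1..5}" by auto
  have "- of_real (2 * a 1) = J 1 * (r *\<^sub>R D) + (r *\<^sub>R D) * J 1"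
    using anticommutator_J_lin5[OF one, of a] unfolding assms by simp
  also have "\<dots> = (2 * r) *\<^sub>R (D * J 1)"
    unfolding mult_scaleR_left mult_scaleR_right J_D[OF one] by (simp add: scaleR_double)
  finally have scalar: "(2 * r) *\<^sub>R (D * J 1) = - of_real (2 * a 1)" ..
  have "J 2 * (D * J 1) = (J 2 * D) * J 1" by (simp only: mult.assoc)
  also have "\<dots> = D * (J 2 * J 1)" by (simp only: J_D[OF two] mult.assoc)
  also have "\<dots> = - (D * J 1 * J 2)" using J_anticomm[of 2 1] by (simp add: mult.assoc)
  finally have "J 2 * (D * J 1) = - (D * J 1 * J 2)" .
  moreover have "J 2 * ((2 * r) *\<^sub>R (D * J 1)) = ((2 * r) *\<^sub>R (D * J 1)) * J 2"
    unfolding scalar by (simp add: of_real_def)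
  ultimately have "(2 * r) *\<^sub>R (J 2 * (D * J 1)) = - ((2 * r) *\<^sub>R (J 2 * (D * J 1)))"
    by simp
  moreover have "(J 2 * (D * J 1)) * (- (J 1 * (D * J 2))) = 1"
  proof -
    have "(J 2 * (D * J 1)) * (J 1 * (D * J 2)) = J 2 * (D * (J 1 * J 1) * D) * J 2"
      by (simp add: mult.assoc)
    then show ?thesis using Jkk[OF one] Jkk[OF two] D_square by simp
  qed
  ultimately show "r = 0" using scaleR_eq_minus_self_right_invertible by fastforce
qed

lemma J6_vcomb: "J 6 * vcomb a b c + vcomb a b c * J 6 = - of_real (2 * b)"
proof -
  have "J 6 * vcomb a b c + vcomb a b c * J 6
      = (J 6 * lin5 a + lin5 a * J 6) + (b *\<^sub>R (J 6 * J 6) + b *\<^sub>R (J 6 * J 6))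
        + c *\<^sub>R (J 6 * J' + J' * J 6)"
    by (simp add: vcomb_def algebra_simps)
  also have "\<dots> = (2 * b) *\<^sub>R (J 6 * J 6)" by (simp add: J6_lin5 J'_J6 scaleR_double)
  also have "\<dots> = - of_real (2 * b)" by (simp add: J66 scaleR_conv_of_real)
  finally show ?thesis .
qed

lemma vcomb_square:
  "vcomb a b c * vcomb a b c
     = - of_real ((\<Sum>i\<in>{1..5}. (a i)\<^sup>2) + b\<^sup>2 + c\<^sup>2) + (2 * c * sth) *\<^sub>R (D * lin5 a)"
proof -
  have "vcomb a b c * vcomb a b c = lin5 a * lin5 a + b *\<^sub>R (lin5 a * J 6 + J 6 * lin5 a)
      + c *\<^sub>R (lin5 a * J' + J' * lin5 a) + (b * b) *\<^sub>R (J 6 * J 6)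
      + (b * c) *\<^sub>R (J 6 * J' + J' * J 6) + (c * c) *\<^sub>R (J' * J')"
    by (simp add: vcomb_def algebra_simps)
  then show ?thesis
    unfolding anticommutator_J'_lin5 lin5_square
    by (simp add: J6_lin5 J'_J6 J66 J'_square of_real_def algebra_simps power2_eq_square)
qed

lemma vcomb_square_scalar:
  assumes "vcomb a b c * vcomb a b c = of_real t"
  shows "c *\<^sub>R lin5 a = 0"
proof -
  define d where "d = 2 * c * sth"
  define n where "n = (\<Sum>i\<in>{1..5}. (a i)\<^sup>2) + b\<^sup>2 + c\<^sup>2"
  have "- of_real n + d *\<^sub>R (D * lin5 a) = of_real t"
    using assms unfolding vcomb_square d_def n_def .
  then have DA: "d *\<^sub>R (D * lin5 a) = of_real (t + n)"
    by (metis add.commute diff_eq_eq diff_minus_eq_add minus_add_cancel of_real_add)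
  have "D * (d *\<^sub>R (D * lin5 a)) = - (d *\<^sub>R lin5 a)"
    by (simp add: mult.assoc[symmetric] D_square)
  then have D_lin5: "- (d *\<^sub>R lin5 a) = (t + n) *\<^sub>R D" using DA by (simp add: of_real_def)
  then have "lin5 (\<lambda>i. - d * a i) = (t + n) *\<^sub>R D" using lin5_scaleR[of "- d" a] by simp
  then have "t + n = 0" by (rule lin5_ne_scaleR_D)
  then have "d *\<^sub>R lin5 a = 0" using D_lin5 by simp
  then show ?thesis using sth_pos by (simp add: d_def)
qed

lemma square_J6_plus_vcomb:
  assumes "vcomb a b c * vcomb a b c = of_real t"
  shows "(J 6 + vcomb a b c) * (J 6 + vcomb a b c) = of_real (t - 1 - 2 * b)"
proof -
  have "(J 6 + vcomb a b c) * (J 6 + vcomb a b c)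
     = J 6 * J 6 + (J 6 * vcomb a b c + vcomb a b c * J 6) + vcomb a b c * vcomb a b c"
    by (simp add: algebra_simps)
  also have "\<dots> = -1 + - of_real (2 * b) + of_real t" unfolding J6_vcomb assms J66 ..
  also have "\<dots> = of_real (t - 1 - 2 * b)" by simp
  finally show ?thesis .
qed

definition "V = {vcomb a b c | a b c. True}"

lemma vcomb_in_V: "vcomb a b c \<in> V" unfolding V_def by blast

lemma lin5_delta:
  assumes "k \<in> {1..5}"
  shows "lin5 (\<lambda>i. if i = k then 1 else 0) = J k"
proof -
  have delta: "(\<lambda>i. (if i = k then 1 else 0) *\<^sub>R J i) = (\<lambda>i. if i = k then J k else 0)"
    by auto
  show ?thesis unfolding lin5_def delta sum.delta[OF finite_atLeastAtMost]
    using assms by (simp only: if_True)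
qed

lemma lin5_add: "lin5 (\<lambda>i. a i + a' i) = lin5 a + lin5 a'"
  by (simp add: lin5_def scaleR_add_left sum.distrib)

lemma vcomb_J6: "vcomb (\<lambda>_. 0) 1 0 = J 6" by (simp add: vcomb_def lin5_def)
lemma vcomb_J': "vcomb (\<lambda>_. 0) 0 1 = J'" by (simp add: vcomb_def lin5_def)
lemma vcomb_J: "k \<in> {1..5} \<Longrightarrow> vcomb (\<lambda>i. if i = k then 1 else 0) 0 0 = J k"
  by (simp add: vcomb_def lin5_delta)

lemma J6_in_V: "J 6 \<in> V" by (metis vcomb_J6 vcomb_in_V)
lemma J'_in_V: "J' \<in> V" by (metis vcomb_J' vcomb_in_V)
lemma J_in_V: "k \<in> {1..5} \<Longrightarrow> J k \<in> V" by (metis vcomb_J vcomb_in_V)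

lemma vcomb_add_J': "vcomb a b c + J' = vcomb a b (c + 1)"
  by (simp add: vcomb_def algebra_simps)

lemma vcomb_add_J:
  "k \<in> {1..5} \<Longrightarrow> vcomb a b c + J k = vcomb (\<lambda>i. a i + (if i = k then 1 else 0)) b c"
  by (simp add: vcomb_def lin5_add lin5_delta algebra_simps)

lemma anticommutator_J'_J:
  assumes "k \<in> {1..5}"
  shows "J' * J k + J k * J' = (2 * sth) *\<^sub>R ((cth *\<^sub>R (J 6 * J') + sth *\<^sub>R J') * J k)"
proof -
  have "J' * J k + J k * J' = (2 * sth) *\<^sub>R (D * J k)"
    using anticommutator_J'_lin5[of "\<lambda>i. if i = k then 1 else 0"] assms
    by (simp add: lin5_delta add.commute)
  then show ?thesis by (simp only: D_eq)
qed

text \<open>\<open>J\<^sub>7\<close> commutes with every product of two elements of \<open>span(J\<^sub>1,\<dots>,J\<^sub>5)\<close> and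
  anticommutes with \<open>J\<^sub>6\<close> times such a product; the two sides of the relation are of these
  two kinds.\<close>
lemma lin5_relation_imp_zero:
  assumes A: "lin5 a * lin5 a = -1" and Y: "lin5 y * lin5 y = -1"
    and rel: "lin5 a * lin5 y + lin5 y * lin5 a
      = (2 * sth) *\<^sub>R ((cth * b) *\<^sub>R (J 6 * lin5 a) + sth *\<^sub>R lin5 a) * lin5 y"
  shows "b = 0"
proof -
  let ?A = "lin5 a" and ?Y = "lin5 y"
  define E where "E = J 6 * ?A * ?Y"
  define k where "k = 2 * sth * cth * b"
  have commutes: "J 7 * (?A * ?Y) = (?A * ?Y) * J 7" "J 7 * (?Y * ?A) = (?Y * ?A) * J 7"
    by (simp_all add: J7_lin5 flip: mult.assoc) (simp_all add: J7_lin5 mult.assoc)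
  have "(2 * sth) *\<^sub>R ((cth * b) *\<^sub>R (J 6 * ?A) + sth *\<^sub>R ?A) * ?Y
      = k *\<^sub>R E + (2 * sth * sth) *\<^sub>R (?A * ?Y)"
    unfolding E_def k_def by (simp add: distrib_right scaleR_add_right mult.assoc)
  then have F: "?A * ?Y + ?Y * ?A - (2 * sth * sth) *\<^sub>R (?A * ?Y) = k *\<^sub>R E"
    using rel by simp
  have "J 7 * (k *\<^sub>R E) = (k *\<^sub>R E) * J 7"
    unfolding F[symmetric] by (simp only: ring_distribs mult_scaleR_left mult_scaleR_right commutes)
  moreover have "J 7 * E = - (E * J 7)"
  proof -
    have "J 7 * E = (J 7 * J 6) * (?A * ?Y)" unfolding E_def by (simp only: mult.assoc)
    also have "\<dots> = - (J 6 * (J 7 * (?A * ?Y)))" by (simp only: J76 mult.assoc mult_minus_left)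
    also have "\<dots> = - (E * J 7)" unfolding E_def commutes(1) by (simp only: mult.assoc)
    finally show ?thesis .
  qed
  ultimately have "k *\<^sub>R (J 7 * E) = - (k *\<^sub>R (J 7 * E))" by simp
  moreover have "(J 7 * E) * (?Y * ?A * J 6 * J 7) = 1"
  proof -
    have "(J 7 * E) * (?Y * ?A * J 6 * J 7) = J 7 * (J 6 * (?A * (?Y * ?Y) * ?A) * J 6) * J 7"
      unfolding E_def by (simp add: mult.assoc)
    then show ?thesis using A Y by (simp add: J66 J77)
  qed
  ultimately have "k = 0" using scaleR_eq_minus_self_right_invertible by blast
  then show ?thesis using sth_pos cth_pos by (simp add: k_def)
qed

lemma J'_relation_imp_one:
  assumes Y: "lin5 y * lin5 y = -1" and e: "e \<noteq> 0"
    and rel: "(e *\<^sub>R J') * lin5 y + lin5 y * (e *\<^sub>R J')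
      = (2 * sth) *\<^sub>R ((cth *\<^sub>R ((b *\<^sub>R J 6) * (e *\<^sub>R J')) + sth *\<^sub>R (e *\<^sub>R J')) * lin5 y)"
  shows "b = 1"
proof -
  let ?Y = "lin5 y"
  have "(e *\<^sub>R J') * ?Y + ?Y * (e *\<^sub>R J') = e *\<^sub>R (J' * ?Y + ?Y * J')"
    by (simp add: scaleR_right_distrib)
  also have "\<dots> = (2 * sth * e) *\<^sub>R (D * ?Y)"
    using anticommutator_J'_lin5[of y] by (simp add: add.commute)
  also have "\<dots> = (2 * sth * e) *\<^sub>R ((cth *\<^sub>R (J 6 * J') + sth *\<^sub>R J') * ?Y)"
    by (simp only: D_eq)
  finally have "(2 * sth) *\<^sub>R ((cth *\<^sub>R ((b *\<^sub>R J 6) * (e *\<^sub>R J')) + sth *\<^sub>R (e *\<^sub>R J')) * ?Y)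
      = (2 * sth * e) *\<^sub>R ((cth *\<^sub>R (J 6 * J') + sth *\<^sub>R J') * ?Y)"
    unfolding rel .
  then have "(2 * sth * e) *\<^sub>R ((cth * (1 - b)) *\<^sub>R (J 6 * J' * ?Y)) = 0"
    by (simp add: algebra_simps)
  then have "(cth * (1 - b)) *\<^sub>R (J 6 * J' * ?Y) = 0" using sth_pos e by simp
  moreover have "(J 6 * J' * ?Y) * (- (?Y * J' * J 6)) = 1"
  proof -
    have "(J 6 * J' * ?Y) * (?Y * J' * J 6) = J 6 * (J' * (?Y * ?Y) * J') * J 6"
      by (simp add: mult.assoc)
    then show ?thesis using Y by (simp add: J66 J'_square)
  qed
  ultimately have "cth * (1 - b) = 0" using scaleR_eq_0_right_invertible by blast
  then show ?thesis using cth_pos by simp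
qed

end

locale stable_conjugation = anticommuting_seven +
  fixes N M :: 'a
  assumes NM: "N * M = 1" and MN: "M * N = 1"
    and conj_V: "x \<in> V \<Longrightarrow> conj_by N M x \<in> V"
    and conj_inv_V: "x \<in> V \<Longrightarrow> conj_by M N x \<in> V"
begin

abbreviation "\<phi> \<equiv> conj_by N M"
abbreviation "\<psi> \<equiv> conj_by M N"

lemma conj_square_minus_one: "x * x = -1 \<Longrightarrow> \<phi> x * \<phi> x = of_real (-1)"
  using conj_by_square[OF NM MN, of x "-1"] by simp

lemma conj_inv_square_minus_one: "x * x = -1 \<Longrightarrow> \<psi> x * \<psi> x = of_real (-1)"
  using conj_by_square[OF MN NM, of x "-1"] by simp

text \<open>The anticommutator of \<open>J\<^sub>6\<close> with any element of \<open>V\<close> is a scalar, so \<open>J\<^sub>6 + y\<close> squares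
  to a scalar along with \<open>y \<in> V\<close>; taking \<open>y = \<psi> x\<close> and applying \<open>\<phi>\<close> gives the claim.\<close>
lemma conj_J6_plus_square:
  assumes "x \<in> V" "x * x = -1"
  shows "\<exists>t. (\<phi> (J 6) + x) * (\<phi> (J 6) + x) = of_real t"
proof -
  obtain a b c where y: "\<psi> x = vcomb a b c" using conj_inv_V[OF assms(1)] unfolding V_def by blast
  have "vcomb a b c * vcomb a b c = of_real (-1)"
    using conj_inv_square_minus_one[OF assms(2)] unfolding y .
  then have "(J 6 + \<psi> x) * (J 6 + \<psi> x) = of_real (-1 - 1 - 2 * b)"
    unfolding y by (rule square_J6_plus_vcomb)
  then have "\<phi> (J 6 + \<psi> x) * \<phi> (J 6 + \<psi> x) = of_real (-1 - 1 - 2 * b)"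
    using conj_by_square[OF NM MN] by blast
  then show ?thesis unfolding conj_by_add conj_by_conj_by[OF NM] by blast
qed

lemma conj_J6_scale:
  obtains b where "\<phi> (J 6) = b *\<^sub>R J 6" and "b * b = 1"
proof -
  have one: "(1::nat) \<in> {1..5}" by simp
  obtain a b c where X: "\<phi> (J 6) = vcomb a b c" using conj_V[OF J6_in_V] unfolding V_def by blast
  have XX: "vcomb a b c * vcomb a b c = of_real (-1)"
    using conj_square_minus_one[OF J66] unfolding X .
  obtain t where "vcomb a b (c + 1) * vcomb a b (c + 1) = of_real t"
    using conj_J6_plus_square[OF J'_in_V J'_square] unfolding X vcomb_add_J' by blast
  then have "(c + 1) *\<^sub>R lin5 a = 0" by (rule vcomb_square_scalar)
  moreover have "c *\<^sub>R lin5 a = 0" using XX by (rule vcomb_square_scalar)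
  ultimately have a: "lin5 a = 0" by (simp add: scaleR_add_left)
  obtain t' where "vcomb (\<lambda>i. a i + (if i = 1 then 1 else 0)) b c
      * vcomb (\<lambda>i. a i + (if i = 1 then 1 else 0)) b c = of_real t'"
    using conj_J6_plus_square[OF J_in_V[OF one] Jkk[OF one]] unfolding X vcomb_add_J[OF one] by blast
  then have "c *\<^sub>R lin5 (\<lambda>i. a i + (if i = 1 then 1 else 0)) = 0" by (rule vcomb_square_scalar)
  then have "c *\<^sub>R J 1 = 0" by (simp add: lin5_add lin5_delta a)
  then have "c = 0" using scaleR_eq_0_right_invertible[OF J_right_inverse, of 1] by simp
  then have Xb: "\<phi> (J 6) = b *\<^sub>R J 6" using X a by (simp add: vcomb_def)
  have "of_real (b * b) = (of_real 1 :: 'a)"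
    using conj_square_minus_one[OF J66] unfolding Xb by (simp add: J66 of_real_def)
  then have "b * b = 1" by (simp only: of_real_eq_iff)
  with Xb show ?thesis by (rule that)
qed

lemma conj_anticommute_J6:
  assumes "x \<in> V" "x * x = -1" "x * J 6 = - (J 6 * x)"
  obtains a c where "\<phi> x = lin5 a + c *\<^sub>R J'" and "c *\<^sub>R lin5 a = 0"
proof -
  obtain b where Xb: "\<phi> (J 6) = b *\<^sub>R J 6" and "b * b = 1" by (rule conj_J6_scale)
  then have "b \<noteq> 0" by auto
  obtain a' b' c' where w: "\<phi> x = vcomb a' b' c'" using conj_V[OF assms(1)] unfolding V_def by blast
  have "\<phi> x * (b *\<^sub>R J 6) = - ((b *\<^sub>R J 6) * \<phi> x)"
    using conj_by_anticommute[OF MN assms(3)] unfolding Xb .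
  then have "b *\<^sub>R (J 6 * \<phi> x + \<phi> x * J 6) = 0" by (simp add: algebra_simps)
  then have "of_real (2 * b') = (0::'a)" using \<open>b \<noteq> 0\<close> unfolding w J6_vcomb by simp
  then have "b' = 0" by (simp only: of_real_eq_0_iff)
  moreover have "c' *\<^sub>R lin5 a' = 0"
    using conj_square_minus_one[OF assms(2)] unfolding w by (rule vcomb_square_scalar)
  ultimately show ?thesis using that w by (simp add: vcomb_def)
qed

lemma conj_J_in_lin5:
  obtains k a where "k \<in> {1..5}" and "\<phi> (J k) = lin5 a"
proof -
  have one: "(1::nat) \<in> {1..5}" and two: "(2::nat) \<in> {1..5}" by auto
  have Jk: "\<exists>a c. \<phi> (J k) = lin5 a + c *\<^sub>R J' \<and> c *\<^sub>R lin5 a = 0" if "k \<in> {1..5}" for k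
    using conj_anticommute_J6[OF J_in_V[OF that] Jkk[OF that]] J6k[OF that] by (metis minus_minus)
  obtain a1 c1 where J1: "\<phi> (J 1) = lin5 a1 + c1 *\<^sub>R J'" "c1 *\<^sub>R lin5 a1 = 0"
    using Jk[OF one] by blast
  obtain a2 c2 where J2: "\<phi> (J 2) = lin5 a2 + c2 *\<^sub>R J'" "c2 *\<^sub>R lin5 a2 = 0"
    using Jk[OF two] by blast
  consider "c1 = 0" | "c2 = 0" | "c1 \<noteq> 0" "c2 \<noteq> 0" by blast
  then show ?thesis
  proof cases
    case 1
    then show ?thesis using that[OF one, of a1] J1 by simp
  next
    case 2
    then show ?thesis using that[OF two, of a2] J2 by simp
  next
    case 3
    then have "\<phi> (J 1) = c1 *\<^sub>R J'" "\<phi> (J 2) = c2 *\<^sub>R J'" using J1 J2 by auto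
    moreover have "\<phi> (J 1) * \<phi> (J 2) = - (\<phi> (J 2) * \<phi> (J 1))"
      using J_anticomm[of 1 2] by (intro conj_by_anticommute[OF MN]) auto
    ultimately have "(c1 * c2) *\<^sub>R (J' * J') = - ((c1 * c2) *\<^sub>R (J' * J'))"
      by (simp add: mult.commute)
    then have "(c1 * c2) *\<^sub>R (1::'a) = - ((c1 * c2) *\<^sub>R 1)" using J'_square by simp
    then have "c1 * c2 = 0" by (metis mult_1 scaleR_eq_minus_self_right_invertible)
    with 3 show ?thesis by simp
  qed
qed

lemma conj_anticommutator_J'_J:
  assumes "k \<in> {1..5}"
  shows "\<phi> J' * \<phi> (J k) + \<phi> (J k) * \<phi> J'
    = (2 * sth) *\<^sub>R ((cth *\<^sub>R (\<phi> (J 6) * \<phi> J') + sth *\<^sub>R \<phi> J') * \<phi> (J k))"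
  using arg_cong[OF anticommutator_J'_J[OF assms], of \<phi>]
  by (simp only: conj_by_add conj_by_mult[OF MN] conj_by_scaleR)

lemma conj_J'_scale:
  obtains e where "\<phi> J' = e *\<^sub>R J'" and "e * e = 1"
proof -
  obtain b where Xb: "\<phi> (J 6) = b *\<^sub>R J 6" and "b * b = 1" by (rule conj_J6_scale)
  obtain a e where Z: "\<phi> J' = lin5 a + e *\<^sub>R J'" and "e *\<^sub>R lin5 a = 0"
    using conj_anticommute_J6[OF J'_in_V J'_square J'_J6] .
  obtain k y where k: "k \<in> {1..5}" and Y: "\<phi> (J k) = lin5 y" by (rule conj_J_in_lin5)
  have YY: "lin5 y * lin5 y = -1" using conj_square_minus_one[OF Jkk[OF k]] unfolding Y by simp
  have "e \<noteq> 0"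
  proof
    assume "e = 0"
    then have aJ: "\<phi> J' = lin5 a" using Z by simp
    have A: "lin5 a * lin5 a = -1" using conj_square_minus_one[OF J'_square] unfolding aJ by simp
    have "lin5 a * lin5 y + lin5 y * lin5 a
        = (2 * sth) *\<^sub>R ((cth * b) *\<^sub>R (J 6 * lin5 a) + sth *\<^sub>R lin5 a) * lin5 y"
      using conj_anticommutator_J'_J[OF k] unfolding Xb Y aJ by (simp add: algebra_simps)
    then have "b = 0" by (rule lin5_relation_imp_zero[OF A YY])
    with \<open>b * b = 1\<close> show False by simp
  qed
  then have ZJ: "\<phi> J' = e *\<^sub>R J'" using Z \<open>e *\<^sub>R lin5 a = 0\<close> by simp
  have "of_real (e * e) = (of_real 1 :: 'a)"
    using conj_square_minus_one[OF J'_square] unfolding ZJ by (simp add: J'_square of_real_def)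
  then have "e * e = 1" by (simp only: of_real_eq_iff)
  with ZJ show ?thesis by (rule that)
qed

lemma conj_J6: "\<phi> (J 6) = J 6"
proof -
  obtain b where Xb: "\<phi> (J 6) = b *\<^sub>R J 6" and "b * b = 1" by (rule conj_J6_scale)
  obtain e where ZJ: "\<phi> J' = e *\<^sub>R J'" and "e * e = 1" by (rule conj_J'_scale)
  obtain k y where k: "k \<in> {1..5}" and Y: "\<phi> (J k) = lin5 y" by (rule conj_J_in_lin5)
  have "lin5 y * lin5 y = -1" using conj_square_minus_one[OF Jkk[OF k]] unfolding Y by simp
  moreover have "e \<noteq> 0" using \<open>e * e = 1\<close> by auto
  ultimately have "b = 1"
    using conj_anticommutator_J'_J[OF k] unfolding Xb ZJ Y by (rule J'_relation_imp_one)
  then show ?thesis using Xb by simp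
qed

theorem conj_inv_signs:
  "\<exists>e \<in> {1, -1}. \<psi> (J 6) = J 6 \<and> \<psi> (J 7) = e *\<^sub>R J 7 \<and> \<psi> J' = e *\<^sub>R J'"
proof -
  obtain e where ZJ: "\<phi> J' = e *\<^sub>R J'" and ee: "e * e = 1" by (rule conj_J'_scale)
  have "\<phi> (J 7) = cth *\<^sub>R \<phi> J' - sth *\<^sub>R (\<phi> (J 6) * \<phi> J')"
    by (subst J7_eq) (simp only: conj_by_diff conj_by_scaleR conj_by_mult[OF MN])
  also have "\<dots> = e *\<^sub>R J 7" unfolding conj_J6 ZJ by (subst J7_eq) (simp add: algebra_simps)
  finally have X7: "\<phi> (J 7) = e *\<^sub>R J 7" .
  have inv: "\<psi> x = e *\<^sub>R x" if "\<phi> x = e *\<^sub>R x" for x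
  proof -
    have "\<psi> x = \<psi> ((e * e) *\<^sub>R x)" using ee by simp
    also have "\<dots> = e *\<^sub>R \<psi> (\<phi> x)" by (simp add: that conj_by_scaleR)
    finally show ?thesis by (simp add: conj_by_conj_by[OF MN])
  qed
  have "\<psi> (J 6) = J 6" using conj_by_conj_by[OF MN, of "J 6"] by (simp add: conj_J6)
  moreover have "e \<in> {1, -1}" using ee by (auto simp: square_eq_1_iff)
  ultimately show ?thesis using inv[OF X7] inv[OF ZJ] by blast
qed

end

lemma matrix_add_rdistrib: "(A + B) ** C = A ** C + B ** C"
  by (vector matrix_matrix_mult_def sum.distrib[symmetric] field_simps)

lemma matrix_mul_neg_right: "(A :: 'a::ring_1^'n^'m) ** (- B) = - (A ** B)"
  by (simp add: matrix_matrix_mult_def vec_eq_iff sum_negf)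

lemma mat_1_neq_0: "(mat 1 :: 'a::zero_neq_one^'n^'n) \<noteq> 0"
proof
  assume "(mat 1 :: 'a^'n^'n) = 0"
  then have "(mat 1 :: 'a^'n^'n) $ undefined $ undefined = 0" by simp
  then show False by (simp add: mat_def)
qed

text \<open>On \<open>real^'n^'n\<close> the library's \<open>*\<close> is the componentwise product; this copy of the type
  carries the matrix product instead, which makes it a \<open>real_algebra_1\<close>.\<close>
typedef ('n::finite) sqmat = "UNIV :: (real^'n^'n) set" morphisms to_mat of_mat by simp

setup_lifting type_definition_sqmat

instantiation sqmat :: (finite) real_algebra_1
begin
lift_definition zero_sqmat :: "'a sqmat" is "0" .
lift_definition one_sqmat :: "'a sqmat" is "mat 1" .
lift_definition plus_sqmat :: "'a sqmat \<Rightarrow> 'a sqmat \<Rightarrow> 'a sqmat" is "(+)" .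
lift_definition minus_sqmat :: "'a sqmat \<Rightarrow> 'a sqmat \<Rightarrow> 'a sqmat" is "(-)" .
lift_definition uminus_sqmat :: "'a sqmat \<Rightarrow> 'a sqmat" is "uminus" .
lift_definition times_sqmat :: "'a sqmat \<Rightarrow> 'a sqmat \<Rightarrow> 'a sqmat" is "(**)" .
lift_definition scaleR_sqmat :: "real \<Rightarrow> 'a sqmat \<Rightarrow> 'a sqmat" is "scaleR" .
instance
proof
  fix a b c :: "'a sqmat" and r s :: real
  show "a + b + c = a + (b + c)" by transfer (simp add: algebra_simps)
  show "a + b = b + a" by transfer (simp add: algebra_simps)
  show "0 + a = a" by transfer simp
  show "- a + a = 0" by transfer simp
  show "a - b = a + - b" by transfer simp
  show "r *\<^sub>R (a + b) = r *\<^sub>R a + r *\<^sub>R b" by transfer (simp add: algebra_simps)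
  show "(r + s) *\<^sub>R a = r *\<^sub>R a + s *\<^sub>R a" by transfer (simp add: algebra_simps)
  show "r *\<^sub>R s *\<^sub>R a = (r * s) *\<^sub>R a" by transfer simp
  show "1 *\<^sub>R a = a" by transfer simp
  show "a * b * c = a * (b * c)" by transfer (simp add: matrix_mul_assoc)
  show "(a + b) * c = a * c + b * c" by transfer (simp add: matrix_add_rdistrib)
  show "a * (b + c) = a * b + a * c" by transfer (simp add: matrix_add_ldistrib)
  show "1 * a = a" by transfer simp
  show "a * 1 = a" by transfer simp
  show "r *\<^sub>R a * b = r *\<^sub>R (a * b)" by transfer (simp add: scalar_matrix_assoc[symmetric])
  show "a * r *\<^sub>R b = r *\<^sub>R (a * b)"
    by transfer (simp add: matrix_scalar_ac scalar_matrix_assoc[symmetric])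
  show "(0::'a sqmat) \<noteq> 1" by transfer (rule mat_1_neq_0[symmetric])
qed
end

lemma of_mat_mult: "of_mat (A ** B) = of_mat A * of_mat B"
  by (simp add: times_sqmat_def of_mat_inverse)
lemma of_mat_add: "of_mat (A + B) = of_mat A + of_mat B"
  by (simp add: plus_sqmat_def of_mat_inverse)
lemma of_mat_uminus: "of_mat (- A) = - of_mat A"
  by (simp add: uminus_sqmat_def of_mat_inverse)
lemma of_mat_scaleR: "of_mat (r *\<^sub>R A) = r *\<^sub>R of_mat A"
  by (simp add: scaleR_sqmat_def of_mat_inverse)
lemma of_mat_1: "of_mat (mat 1) = 1"
  by (simp add: one_sqmat_def)
lemma of_mat_0: "of_mat 0 = 0"
  by (simp add: zero_sqmat_def)
lemma of_mat_eq_iff: "of_mat A = of_mat B \<longleftrightarrow> A = B"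
  by (simp add: of_mat_inject)
lemma of_mat_sum: "of_mat (sum f S) = (\<Sum>i\<in>S. of_mat (f i))"
  by (induction S rule: infinite_finite_induct) (auto simp: of_mat_0 of_mat_add)

lemma orthogonal_matrix_inv:
  assumes "orthogonal_matrix (N :: real^'n^'n)"
  shows "matrix_inv N = transpose N"
proof -
  have NT: "N ** transpose N = mat 1" and TN: "transpose N ** N = mat 1"
    using assms unfolding orthogonal_matrix_def by auto
  define A where "A = matrix_inv N"
  have "N ** A = mat 1"
    unfolding A_def matrix_inv_def by (rule someI2[of _ "transpose N"]) (auto simp: NT TN)
  then have "transpose N ** N ** A = transpose N" by (simp flip: matrix_mul_assoc)
  then show ?thesis unfolding A_def TN by simp
qed

text \<open>An injective linear map of a finite-dimensional subspace into itself is onto.\<close>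
lemma orthogonal_conj_stable_transpose:
  fixes V :: "(real^'n^'n) set" and N :: "real^'n^'n"
  assumes V: "subspace V" and N: "orthogonal_matrix N"
    and stable: "\<And>K. K \<in> V \<Longrightarrow> N ** K ** transpose N \<in> V"
    and K: "K \<in> V"
  shows "transpose N ** K ** N \<in> V"
proof -
  have NT: "N ** transpose N = mat 1" and TN: "transpose N ** N = mat 1"
    using N unfolding orthogonal_matrix_def by auto
  define f where "f X = N ** X ** transpose N" for X
  have f_inverse: "transpose N ** f X ** N = X" for X
    by (simp add: f_def matrix_mul_assoc TN) (simp flip: matrix_mul_assoc add: TN)
  have lin: "linear f"
    by (rule linearI) (simp_all add: f_def matrix_add_ldistrib matrix_add_rdistrib
        scalar_matrix_assoc[symmetric] matrix_scalar_ac)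
  have "inj f" by (metis f_inverse injI)
  then have "dim (f ` V) = dim V" by (intro dim_image_eq[OF lin]) (auto simp: inj_on_def)
  moreover have "f ` V \<subseteq> V" using stable by (auto simp: f_def)
  ultimately have "f ` V = V" using subspace_dim_equal[OF linear_subspace_image[OF lin V] V] by simp
  then obtain L where "L \<in> V" "K = f L" using K by blast
  then show ?thesis using f_inverse[of L] by simp
qed

lemma span_eq_lincombs:
  fixes f :: "nat \<Rightarrow> 'a::real_vector"
  shows "span ({f i | i. i \<in> {1..6}} \<union> {u})
    = {(\<Sum>i\<in>{1..5}. a i *\<^sub>R f i) + b *\<^sub>R f 6 + c *\<^sub>R u | a b c. True}"
    (is "span ?G = ?L")
proof
  have "subspace ?L"
    unfolding subspace_def
  proof (intro conjI ballI allI)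
    show "0 \<in> ?L" by (rule CollectI, rule exI[of _ "\<lambda>_. 0"], rule exI[of _ 0], rule exI[of _ 0]) simp
  next
    fix x y assume "x \<in> ?L" "y \<in> ?L"
    then obtain a b c a' b' c' where "x = (\<Sum>i\<in>{1..5}. a i *\<^sub>R f i) + b *\<^sub>R f 6 + c *\<^sub>R u"
      "y = (\<Sum>i\<in>{1..5}. a' i *\<^sub>R f i) + b' *\<^sub>R f 6 + c' *\<^sub>R u" by blast
    then have "x + y = (\<Sum>i\<in>{1..5}. (a i + a' i) *\<^sub>R f i) + (b + b') *\<^sub>R f 6 + (c + c') *\<^sub>R u"
      by (simp add: scaleR_add_left sum.distrib algebra_simps)
    then show "x + y \<in> ?L" by (intro CollectI exI[of _ "\<lambda>i. a i + a' i"]) blast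
  next
    fix r x assume "x \<in> ?L"
    then obtain a b c where "x = (\<Sum>i\<in>{1..5}. a i *\<^sub>R f i) + b *\<^sub>R f 6 + c *\<^sub>R u" by blast
    then have "r *\<^sub>R x = (\<Sum>i\<in>{1..5}. (r * a i) *\<^sub>R f i) + (r * b) *\<^sub>R f 6 + (r * c) *\<^sub>R u"
      by (simp add: scaleR_sum_right scaleR_add_right)
    then show "r *\<^sub>R x \<in> ?L" by (intro CollectI exI[of _ "\<lambda>i. r * a i"]) blast
  qed
  moreover have "?G \<subseteq> ?L"
  proof
    fix x assume "x \<in> ?G"
    then consider "x = f 6" | i where "i \<in> {1..5}" "x = f i" | "x = u"
      by (auto simp: le_Suc_eq eval_nat_numeral)
    then show "x \<in> ?L"
    proof cases
      case 1
      then have "x = (\<Sum>j\<in>{1..5}. 0 *\<^sub>R f j) + 1 *\<^sub>R f 6 + 0 *\<^sub>R u" by simp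
      then show ?thesis by (intro CollectI exI[of _ "\<lambda>_. 0"]) blast
    next
      case (2 i)
      then have "x = (\<Sum>j\<in>{1..5}. (if j = i then 1 else 0) *\<^sub>R f j) + 0 *\<^sub>R f 6 + 0 *\<^sub>R u"
        by (simp add: if_distrib[of "\<lambda>r. r *\<^sub>R _"] cong: if_cong)
      then show ?thesis by (intro CollectI exI[of _ "\<lambda>j. if j = i then 1 else 0"]) blast
    next
      case 3
      then have "x = (\<Sum>j\<in>{1..5}. 0 *\<^sub>R f j) + 0 *\<^sub>R f 6 + 1 *\<^sub>R u" by simp
      then show ?thesis by (intro CollectI exI[of _ "\<lambda>_. 0"]) blast
    qed
  qed
  ultimately show "span ?G \<subseteq> ?L" by (rule span_minimal[rotated])
next
  show "?L \<subseteq> span ?G"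
  proof safe
    fix a b c
    have "(\<Sum>i\<in>{1..5}. a i *\<^sub>R f i) \<in> span ?G"
      by (intro span_sum span_scale span_base) auto
    moreover have "b *\<^sub>R f 6 \<in> span ?G" "c *\<^sub>R u \<in> span ?G"
      by (intro span_scale span_base; auto)+
    ultimately show "(\<Sum>i\<in>{1..5}. a i *\<^sub>R f i) + b *\<^sub>R f 6 + c *\<^sub>R u \<in> span ?G"
      by (intro span_add)
  qed
qed

lemma orthogonal_normalizer_conj_signs:
  fixes J :: "nat \<Rightarrow> real^'n^'n" and N :: "real^'n^'n"
  assumes sq: "\<And>i. i \<in> {1..7} \<Longrightarrow> J i ** J i = - mat 1"
    and anti: "\<And>i j. i \<in> {1..7} \<Longrightarrow> j \<in> {1..7} \<Longrightarrow> i \<noteq> j \<Longrightarrow> J i ** J j = - (J j ** J i)"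
    and th: "0 < \<theta>" "\<theta> < pi / 2"
  defines "J' \<equiv> cos \<theta> *\<^sub>R J 7 + sin \<theta> *\<^sub>R (J 6 ** J 7)"
    and "V \<equiv> span ({J i | i. i \<in> {1..6}} \<union> {cos \<theta> *\<^sub>R J 7 + sin \<theta> *\<^sub>R (J 6 ** J 7)})"
  assumes N: "orthogonal_matrix N" and stable: "\<forall>K\<in>V. N ** K ** matrix_inv N \<in> V"
  shows "\<exists>e \<in> {1, -1::real}. matrix_inv N ** J 6 ** N = J 6 \<and>
    matrix_inv N ** J 7 ** N = e *\<^sub>R J 7 \<and> matrix_inv N ** J' ** N = e *\<^sub>R J'"
proof -
  interpret A: anticommuting_seven "\<lambda>i. of_mat (J i)" \<theta>
  proof
    show "of_mat (J i) * of_mat (J i) = -1" if "i \<in> {1..7}" for i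
      using sq[OF that] by (metis of_mat_1 of_mat_mult of_mat_uminus)
    show "of_mat (J i) * of_mat (J j) = - (of_mat (J j) * of_mat (J i))"
      if "i \<in> {1..7}" "j \<in> {1..7}" "i \<noteq> j" for i j
      using anti[OF that] by (metis of_mat_mult of_mat_uminus)
  qed (use th in auto)
  have J': "A.J' = of_mat J'"
    unfolding A.J'_def A.D_def A.cth_def A.sth_def J'_def by (simp add: of_mat_add of_mat_scaleR of_mat_mult)
  have vcomb: "A.vcomb a b c = of_mat ((\<Sum>i\<in>{1..5}. a i *\<^sub>R J i) + b *\<^sub>R J 6 + c *\<^sub>R J')" for a b c
    unfolding A.vcomb_def A.lin5_def J' by (simp add: of_mat_add of_mat_scaleR of_mat_sum)
  have AV: "A.V = of_mat ` V"
    unfolding A.V_def V_def J'_def[symmetric] span_eq_lincombs vcomb by blast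
  have inv: "matrix_inv N = transpose N" using N by (rule orthogonal_matrix_inv)
  have NT: "N ** transpose N = mat 1" and TN: "transpose N ** N = mat 1"
    using N unfolding orthogonal_matrix_def by auto
  have conj: "conj_by (of_mat P) (of_mat Q) (of_mat K) = of_mat (P ** K ** Q)" for P Q K
    by (simp add: conj_by_def of_mat_mult)
  interpret B: stable_conjugation "\<lambda>i. of_mat (J i)" \<theta> "of_mat N" "of_mat (transpose N)"
  proof
    show "of_mat N * of_mat (transpose N) = 1" "of_mat (transpose N) * of_mat N = 1"
      by (simp_all add: NT TN of_mat_1 flip: of_mat_mult)
    show "conj_by (of_mat N) (of_mat (transpose N)) x \<in> A.V" if "x \<in> A.V" for x
      using that stable unfolding AV inv by (auto simp: conj)
    show "conj_by (of_mat (transpose N)) (of_mat N) x \<in> A.V" if xV: "x \<in> A.V" for x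
    proof -
      obtain K where K: "K \<in> V" and x: "x = of_mat K" using xV unfolding AV by blast
      have "transpose N ** K ** N \<in> V"
        using orthogonal_conj_stable_transpose[OF _ N _ K] stable unfolding V_def inv
        by (simp add: subspace_span)
      then show ?thesis unfolding AV x conj by blast
    qed
  qed
  obtain e where "e \<in> {1, -1::real}"
    and "of_mat (transpose N ** J 6 ** N) = of_mat (J 6)"
    and "of_mat (transpose N ** J 7 ** N) = e *\<^sub>R of_mat (J 7)"
    and "of_mat (transpose N ** J' ** N) = e *\<^sub>R of_mat J'"
    using B.conj_inv_signs unfolding J' conj by blast
  then show ?thesis unfolding inv by (auto simp: of_mat_eq_iff simp flip: of_mat_scaleR)
qed

lemma square_neg_one_neq_neg:
  assumes "(A :: real^'n^'n) ** A = - mat 1"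
  shows "A \<noteq> - A"
proof
  assume "A = - A"
  then have "(2::real) *\<^sub>R A = 0" by (metis add.right_inverse scaleR_2)
  then have "A = 0" by simp
  then show False using assms mat_1_neq_0[where 'a = real and 'n = 'n] by simp
qed

lemma WS_pair_conj_neg:
  assumes "WS_pair V ip" and "J \<in> V"
  shows "\<exists>N. orthogonal_matrix N \<and> (\<forall>K\<in>V. N ** K ** matrix_inv N \<in> V) \<and>
    matrix_inv N ** J ** N = - J"
proof -
  obtain N where "N \<in> normalizer_set V ip" and NJ: "N ** J = - (J ** N)"
    using assms unfolding WS_pair_def by blast
  then have N: "orthogonal_matrix N" and "\<forall>K\<in>V. N ** K ** matrix_inv N \<in> V"
    unfolding normalizer_set_def by auto
  moreover have "matrix_inv N ** J ** N = - J"
  proof -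
    have "matrix_inv N ** J ** N = transpose N ** (J ** N)"
      by (simp add: orthogonal_matrix_inv[OF N] matrix_mul_assoc)
    also have "\<dots> = - (transpose N ** N ** J)"
    proof -
      have "J ** N = - (N ** J)" using NJ by simp
      then show ?thesis by (simp only: matrix_mul_neg_right matrix_mul_assoc)
    qed
    also have "\<dots> = - J" using N unfolding orthogonal_matrix_def by simp
    finally show ?thesis .
  qed
  ultimately show ?thesis by blast
qed

theorem mainTheorem11:
  fixes J :: "nat \<Rightarrow> mat8" and \<theta> :: real
  assumes ocs: "\<And>i. i \<in> {1..7} \<Longrightarrow> ocs (J i)"
    and anti: "\<And>i j. i \<in> {1..7} \<Longrightarrow> j \<in> {1..7} \<Longrightarrow> i \<noteq> j \<Longrightarrow> J i ** J j = - (J j ** J i)"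
    and th: "0 < \<theta>" "\<theta> < pi / 2"
  defines "J' \<equiv> cos \<theta> *\<^sub>R J 7 + sin \<theta> *\<^sub>R (J 6 ** J 7)"
    and "V \<equiv> span ({J i | i. i \<in> {1..6}} \<union> {cos \<theta> *\<^sub>R J 7 + sin \<theta> *\<^sub>R (J 6 ** J 7)})"
  shows "(\<forall>N. orthogonal_matrix N \<and> (\<forall>K\<in>V. N ** K ** matrix_inv N \<in> V) \<longrightarrow>
            (\<exists>\<epsilon>7 \<in> {1, -1::real}.
               matrix_inv N ** J 6 ** N = J 6 \<and>
               matrix_inv N ** J 7 ** N = \<epsilon>7 *\<^sub>R J 7 \<and>
               matrix_inv N ** J' ** N = \<epsilon>7 *\<^sub>R J'))
      \<and> \<not> (\<exists>N. orthogonal_matrix N \<and> (\<forall>K\<in>V. N ** K ** matrix_inv N \<in> V) \<and>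
               matrix_inv N ** J 6 ** N = - J 6)
      \<and> (\<forall>ip. inner_product_on V ip \<and> standard_on (span {J i | i. i \<in> {1..5}}) ip \<and>
               (\<forall>i\<in>{1..5}. ip (J 6) (J i) = 0 \<and> ip J' (J i) = 0)
             \<longrightarrow> \<not> WS_pair V ip)"
proof -
  have sq: "J i ** J i = - mat 1" if "i \<in> {1..7}" for i
    using ocs[OF that] unfolding ocs_def by blast
  have signs: "\<forall>N. orthogonal_matrix N \<and> (\<forall>K\<in>V. N ** K ** matrix_inv N \<in> V) \<longrightarrow>
      (\<exists>\<epsilon>7 \<in> {1, -1::real}. matrix_inv N ** J 6 ** N = J 6 \<and>
         matrix_inv N ** J 7 ** N = \<epsilon>7 *\<^sub>R J 7 \<and> matrix_inv N ** J' ** N = \<epsilon>7 *\<^sub>R J')"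
    using orthogonal_normalizer_conj_signs[of J, OF sq anti th] unfolding J'_def V_def by blast
  moreover have no_flip: "\<not> (\<exists>N. orthogonal_matrix N \<and> (\<forall>K\<in>V. N ** K ** matrix_inv N \<in> V) \<and>
      matrix_inv N ** J 6 ** N = - J 6)"
    using signs square_neg_one_neq_neg[OF sq[of 6]] by fastforce
  moreover have "J 6 \<in> V" unfolding V_def by (intro span_base) auto
  then have "\<not> WS_pair V ip" for ip using no_flip WS_pair_conj_neg by blast
  ultimately show ?thesis by blast
qed

end
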